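(* $E_{range}$ and $E_0$ are learn-incomparable: there is a family of structures that is $E_0$-learnable but not $E_{range}$-learnable, and there is a family of structures that is $E_{range}$-learnable but not $E_0$-learnable (for instance the family of graphs $\{\mathsf{R}_n\oplus\mathsf{I}:n\geq 2\}\cup\{\mathsf{R}\oplus\mathsf{I}\}$).
   Context: All structures are countable, have domain $\mathbb{N}$, are in a finite relational signature, and are identified with their atomic diagrams (elements of $2^{\mathbb{N}}$). A family of structures is a countable set of pairwise nonisomorphic such structures. $\mathrm{LD}(\mathfrak{K})\subseteq 2^{\mathbb{N}}$ is the set of structures with domain $\mathbb{N}$ isomorphic to a member of $\mathfrak{K}$ (subspace topology). For an equivalence relation $E$ on a space $X$, $\mathfrak{K}$ is $E$-learnable if there is a continuous $\Gamma:\mathrm{LD}(\mathfrak{K})\to X$ with $\mathcal{S}\cong\mathcal{S}'\iff\Gamma(\mathcal{S})\,E\,\Gamma(\mathcal{S}')$ for all $\mathcal{S},\mathcal{S}'\in\mathrm{LD}(\mathfrak{K})$. On Baire space $\mathbb{N}^{\mathbb{N}}$: $p\,E_0\,q\iff\exists m\,\forall n\ge m\ p(n)=q(n)$; $p\,E_{range}\,q\iff\{p(m):m\}=\{q(m):m\}$. Graphs are undirected without self-loops. $\mathsf{R}$ is the graph on $\mathbb{N}$ with edges $\{i,i+1\}$; $\mathsf{I}$ is the graph on $\mathbb{N}$ with no edges; for $n\ge2$, $\mathsf{R}_n$ is the graph on $\{0,\dots,n-1\}$ with edges $\{i,i+1\}$, $i<n-1$; $G_0\oplus G_1$ is the disjoint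 union of graphs (re-indexed to have domain $\mathbb{N}$). *)

theory Defs
  imports "HOL-Analysis.Analysis"
begin

text \<open>Structures on domain nat in a finite relational signature sig (list of arities).
  A structure is identified with its atomic diagram: the set of true atomic facts
  R_i(t), encoded as a predicate on pairs (i, t) with t a tuple of naturals.
  The space of all such predicates carries the product topology of discrete bool,
  i.e. it is (a copy of) Cantor space 2^N via a numbering of the countably many facts.\<close>

type_synonym struc = "nat \<times> nat list \<Rightarrow> bool"

definition is_struc :: "nat list \<Rightarrow> struc \<Rightarrow> bool" where
  "is_struc sig S \<longleftrightarrow> (\<forall>i t. S (i, t) \<longrightarrow> i < length sig \<and> length t = sig ! i)"

definition iso :: "struc \<Rightarrow> struc \<Rightarrow> bool" where
  "iso S S' \<longleftrightarrow> (\<exists>f::nat \<Rightarrow> nat. bij f \<and> (\<forall>i t. S (i, t) \<longleftrightarrow> S' (i, map f t)))"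

definition family :: "nat list \<Rightarrow> struc set \<Rightarrow> bool" where
  "family sig K \<longleftrightarrow> countable K \<and> (\<forall>S\<in>K. is_struc sig S)
      \<and> (\<forall>S\<in>K. \<forall>S'\<in>K. iso S S' \<longrightarrow> S = S')"

definition LD :: "struc set \<Rightarrow> struc set" where
  "LD K = {S. \<exists>T\<in>K. iso S T}"

definition struc_top :: "struc topology" where
  "struc_top = product_topology (\<lambda>_. discrete_topology UNIV) UNIV"

definition baire :: "(nat \<Rightarrow> nat) topology" where
  "baire = product_topology (\<lambda>_. discrete_topology UNIV) UNIV"

definition learnable :: "'a topology \<Rightarrow> ('a \<Rightarrow> 'a \<Rightarrow> bool) \<Rightarrow> struc set \<Rightarrow> bool" where
  "learnable X E K \<longleftrightarrow> (\<exists>\<Gamma>. continuous_map (subtopology struc_top (LD K)) X \<Gamma>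
      \<and> (\<forall>S\<in>LD K. \<forall>S'\<in>LD K. iso S S' \<longleftrightarrow> E (\<Gamma> S) (\<Gamma> S')))"

definition E0 :: "(nat \<Rightarrow> nat) \<Rightarrow> (nat \<Rightarrow> nat) \<Rightarrow> bool" where
  "E0 p q \<longleftrightarrow> (\<exists>m. \<forall>n\<ge>m. p n = q n)"

definition Erange :: "(nat \<Rightarrow> nat) \<Rightarrow> (nat \<Rightarrow> nat) \<Rightarrow> bool" where
  "Erange p q \<longleftrightarrow> range p = range q"

definition graph_struc :: "(nat \<Rightarrow> nat \<Rightarrow> bool) \<Rightarrow> struc" where
  "graph_struc E = (\<lambda>(i, t). i = 0 \<and> (\<exists>a b. t = [a, b] \<and> E a b))"

text \<open>R_n (+) I, re-indexed: path on 0..n-1, all other vertices isolated.\<close>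
definition RnI :: "nat \<Rightarrow> struc" where
  "RnI n = graph_struc (\<lambda>a b. a < n \<and> b < n \<and> (a + 1 = b \<or> b + 1 = a))"

text \<open>R (+) I, re-indexed: infinite path on the even numbers, odd numbers isolated.\<close>
definition RI :: struc where
  "RI = graph_struc (\<lambda>a b. even a \<and> even b \<and> (a + 2 = b \<or> b + 2 = a))"

end

theory Submission
  imports Defs "HOL-Library.Countable"
begin

text \<open>
  A continuous learner reads only finitely much of its input before committing to each
  coordinate of its output. For omega versus omega*, every copy of either order agrees on any
  initial segment with a copy of the other, so an Erange-learner would give both the same range;
  yet counting the vertices below and above vertex 0 identifies the order type in the limit, which
  suffices for E0. For the paths R_n (+) I versus R (+) I, the set of k such that at least k
  vertices carry an edge is an isomorphism invariant separating the family, and a learner can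
  enumerate exactly this set. Against an E0-learner one builds, by a diagonal recursion, a copy
  of R (+) I that agrees on longer and longer initial segments with copies of finite paths on
  which the learner differs from its values on R (+) I at ever later positions; then the learner
  cannot be eventually equal on the two copies of R (+) I.
\<close>

definition agree_upto :: "nat \<Rightarrow> struc \<Rightarrow> struc \<Rightarrow> bool" where
  "agree_upto B S T \<longleftrightarrow> (\<forall>x. (\<forall>v\<in>set (snd x). v \<le> B) \<longrightarrow> S x = T x)"

lemma topspace_struc_top: "topspace struc_top = UNIV"
  by (simp add: struc_top_def PiE_UNIV_domain)

lemma openin_struc_top_cylinder:
  assumes "openin struc_top U" and "T \<in> U"
  shows "\<exists>F. finite F \<and> (\<forall>S. (\<forall>x\<in>F. S x = T x) \<longrightarrow> S \<in> U)"
proof -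
  obtain V where fin: "finite {i. V i \<noteq> (UNIV :: bool set)}"
    and T: "T \<in> Pi\<^sub>E UNIV V" and sub: "Pi\<^sub>E UNIV V \<subseteq> U"
    using assms unfolding struc_top_def openin_product_topology_alt by auto
  have "S \<in> U" if "\<forall>x\<in>{i. V i \<noteq> UNIV}. S x = T x" for S
  proof -
    from that T have "S \<in> Pi\<^sub>E UNIV V" by (force simp: PiE_UNIV_domain)
    with sub show "S \<in> U" by blast
  qed
  with fin show ?thesis by blast
qed

lemma continuous_map_struc_top_finite_dependence:
  assumes "finite F" and "\<And>S S'. \<forall>x\<in>F. S x = S' x \<Longrightarrow> g S = g S'"
  shows "continuous_map struc_top (discrete_topology UNIV) g"
proof -
  have "\<exists>V. finite {x. V x \<noteq> UNIV} \<and> S0 \<in> Pi\<^sub>E UNIV V \<and> Pi\<^sub>E UNIV V \<subseteq> {S. g S \<in> U}"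
    if "g S0 \<in> U" for S0 U
  proof (intro exI conjI)
    define V where "V x = (if x \<in> F then {S0 x} else UNIV)" for x
    show "finite {x. V x \<noteq> UNIV}"
      using assms(1) by (rule finite_subset[rotated]) (auto simp: V_def)
    show "S0 \<in> Pi\<^sub>E UNIV V" by (simp add: V_def PiE_UNIV_domain)
    show "Pi\<^sub>E UNIV V \<subseteq> {S. g S \<in> U}"
    proof
      fix S assume "S \<in> Pi\<^sub>E UNIV V"
      then have "\<forall>x\<in>F. S x = S0 x" by (metis PiE_mem UNIV_I V_def singletonD)
      then have "g S = g S0" by (rule assms(2))
      with that show "S \<in> {S. g S \<in> U}" by simp
    qed
  qed
  then show ?thesis
    unfolding continuous_map_def struc_top_def openin_product_topology_alt
    by (simp add: PiE_UNIV_domain)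
qed

lemma continuous_map_baire_finite_dependence:
  assumes "\<And>m. finite (F m)" and "\<And>m S S'. \<forall>x\<in>F m. S x = S' x \<Longrightarrow> \<Gamma> S m = \<Gamma> S' m"
  shows "continuous_map (subtopology struc_top L) baire \<Gamma>"
  unfolding baire_def continuous_map_componentwise_UNIV
proof
  fix m
  show "continuous_map (subtopology struc_top L) (discrete_topology UNIV) (\<lambda>S. \<Gamma> S m)"
    by (rule continuous_map_from_subtopology, rule continuous_map_struc_top_finite_dependence[of "F m"])
      (use assms in auto)
qed

lemma agree_upto_finite:
  assumes "finite F"
  shows "\<exists>B. \<forall>S T. agree_upto B S T \<longrightarrow> (\<forall>x\<in>F. S x = T x)"
proof (intro exI allI impI)
  define B where "B = Max (insert 0 (\<Union>x\<in>F. set (snd x)))"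
  fix S T assume "agree_upto B S T"
  moreover have "\<forall>x\<in>F. \<forall>v\<in>set (snd x). v \<le> B"
    using assms unfolding B_def by (intro ballI Max_ge) auto
  ultimately show "\<forall>x\<in>F. S x = T x" unfolding agree_upto_def by blast
qed

lemma continuous_map_baire_agree_upto:
  assumes cont: "continuous_map (subtopology struc_top L) baire \<Gamma>" and T: "T \<in> L"
  obtains B where "\<And>S. S \<in> L \<Longrightarrow> agree_upto B S T \<Longrightarrow> \<Gamma> S m = \<Gamma> T m"
proof -
  have "continuous_map (subtopology struc_top L) (discrete_topology UNIV) (\<lambda>S. \<Gamma> S m)"
    using cont unfolding baire_def continuous_map_componentwise_UNIV by (rule spec)
  then have "openin (subtopology struc_top L) {S \<in> topspace (subtopology struc_top L). \<Gamma> S m \<in> {\<Gamma> T m}}"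
    by (rule openin_continuous_map_preimage) simp
  then have "openin (subtopology struc_top L) {S \<in> L. \<Gamma> S m = \<Gamma> T m}"
    by (simp add: topspace_struc_top)
  then obtain U where U: "openin struc_top U" and eq: "{S \<in> L. \<Gamma> S m = \<Gamma> T m} = U \<inter> L"
    unfolding openin_subtopology by blast
  then have mem: "S \<in> U \<longleftrightarrow> \<Gamma> S m = \<Gamma> T m" if "S \<in> L" for S
    using that by (simp add: set_eq_iff) (metis IntI Int_iff mem_Collect_eq)
  have "T \<in> U" using mem T by simp
  with U obtain F where "finite F" and F: "\<forall>S. (\<forall>x\<in>F. S x = T x) \<longrightarrow> S \<in> U"
    using openin_struc_top_cylinder by blast
  obtain B where B: "\<forall>S. agree_upto B S T \<longrightarrow> (\<forall>x\<in>F. S x = T x)"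
    using agree_upto_finite[OF \<open>finite F\<close>] by blast
  show thesis
  proof (rule that)
    fix S assume "S \<in> L" and "agree_upto B S T"
    with B F have "S \<in> U" by blast
    with mem \<open>S \<in> L\<close> show "\<Gamma> S m = \<Gamma> T m" by blast
  qed
qed

lemma iso_refl: "iso S S"
  unfolding iso_def by (rule exI[of _ id]) simp

lemma iso_sym:
  assumes "iso S S'"
  shows "iso S' S"
proof -
  obtain f where f: "bij f" "\<forall>i t. S (i, t) \<longleftrightarrow> S' (i, map f t)"
    using assms unfolding iso_def by blast
  have "S' (i, t) \<longleftrightarrow> S (i, map (inv f) t)" for i t
    using f(2)[rule_format, of i "map (inv f) t"] f(1)
    by (simp add: bij_is_surj surj_f_inv_f map_idI)
  with f(1) show ?thesis unfolding iso_def by (blast intro: bij_imp_bij_inv)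
qed

lemma iso_trans:
  assumes "iso S S'" and "iso S' S''"
  shows "iso S S''"
proof -
  obtain f where f: "bij f" "\<forall>i t. S (i, t) \<longleftrightarrow> S' (i, map f t)"
    using assms(1) unfolding iso_def by blast
  obtain g where g: "bij g" "\<forall>i t. S' (i, t) \<longleftrightarrow> S'' (i, map g t)"
    using assms(2) unfolding iso_def by blast
  have "\<forall>i t. S (i, t) \<longleftrightarrow> S'' (i, map (g \<circ> f) t)" using f(2) g(2) by simp
  with f(1) g(1) show ?thesis unfolding iso_def by (blast intro: bij_comp)
qed

lemma graph_struc_edge [simp]: "graph_struc E (0, [a, b]) = E a b"
  by (simp add: graph_struc_def)

lemma is_struc_graph_struc: "is_struc [2] (graph_struc E)"
  unfolding is_struc_def graph_struc_def by auto

lemma map_eq_pair_iff: "map f t = [x, y] \<longleftrightarrow> (\<exists>a b. t = [a, b] \<and> x = f a \<and> y = f b)"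
  by (cases t; cases "tl t"; auto)

lemma iso_graph_strucI:
  assumes "bij f" and "\<And>a b. E a b \<longleftrightarrow> E' (f a) (f b)"
  shows "iso (graph_struc E) (graph_struc E')"
  unfolding iso_def graph_struc_def using assms by (auto simp: map_eq_pair_iff)

lemma iso_graph_strucD:
  assumes "iso (graph_struc E) (graph_struc E')"
  obtains f where "bij f" and "\<And>a b. E a b \<longleftrightarrow> E' (f a) (f b)"
proof -
  obtain f where f: "bij f" "\<forall>i t. graph_struc E (i, t) \<longleftrightarrow> graph_struc E' (i, map f t)"
    using assms unfolding iso_def by blast
  show thesis
    by (rule that[OF f(1)]) (use f(2)[rule_format, of 0 "[_, _]"] in simp)
qed

lemma iso_graph_struc_pullback:
  assumes "iso S (graph_struc E)"
  obtains f where "bij f" and "S = graph_struc (\<lambda>a b. E (f a) (f b))"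
proof -
  obtain f where f: "bij f" "\<forall>i t. S (i, t) \<longleftrightarrow> graph_struc E (i, map f t)"
    using assms unfolding iso_def by blast
  have "S = graph_struc (\<lambda>a b. E (f a) (f b))"
    using f(2) by (auto simp: fun_eq_iff graph_struc_def map_eq_pair_iff)
  with f(1) show thesis by (rule that)
qed

lemma agree_upto_graph_struc:
  assumes "\<And>a b. a \<le> B \<Longrightarrow> b \<le> B \<Longrightarrow> E a b \<longleftrightarrow> E' a b"
  shows "agree_upto B (graph_struc E) (graph_struc E')"
  unfolding agree_upto_def graph_struc_def using assms by auto

lemma bij_betw_infinite_nat:
  fixes A B :: "nat set"
  assumes "infinite A" and "infinite B"
  obtains h where "bij_betw h A B"
proof
  have "bij_betw (to_nat_on A) A UNIV" "bij_betw (from_nat_into B) UNIV B"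
    using assms by (simp_all add: to_nat_on_infinite bij_betw_from_nat_into)
  then show "bij_betw (from_nat_into B \<circ> to_nat_on A) A B" by (rule bij_betw_trans)
qed

lemma inj_on_extend_bij:
  fixes c d :: "nat \<Rightarrow> nat"
  assumes "inj_on c I" "inj_on d I" "infinite (- c ` I)" "infinite (- d ` I)"
  shows "\<exists>f. bij f \<and> (\<forall>i\<in>I. f (c i) = d i) \<and> f ` (- c ` I) = - d ` I"
proof -
  obtain h where h: "bij_betw h (- c ` I) (- d ` I)"
    using bij_betw_infinite_nat[OF assms(3,4)] .
  have g: "bij_betw (d \<circ> the_inv_into I c) (c ` I) (d ` I)"
    using assms(1,2) by (blast intro: bij_betw_trans bij_betw_the_inv_into inj_on_imp_bij_betw)
  define f where "f = (\<lambda>x. if x \<in> c ` I then (d \<circ> the_inv_into I c) x else h x)"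
  have "bij_betw f (c ` I) (d ` I)"
    using g unfolding f_def by (rule bij_betw_cong[THEN iffD1, rotated]) simp
  moreover have "bij_betw f (- c ` I) (- d ` I)"
    using h unfolding f_def by (rule bij_betw_cong[THEN iffD1, rotated]) simp
  ultimately have "bij_betw f (c ` I \<union> - c ` I) (d ` I \<union> - d ` I)"
    by (rule bij_betw_combine) blast
  then have "bij f" by simp
  moreover have "f (c i) = d i" if "i \<in> I" for i
    using that assms(1) by (simp add: f_def the_inv_into_f_f)
  moreover have "f ` (- c ` I) = h ` (- c ` I)"
    by (rule image_cong) (simp_all add: f_def)
  then have "f ` (- c ` I) = - d ` I"
    using h by (simp add: bij_betw_def)
  ultimately show ?thesis by blast
qed

definition graph_image :: "(nat \<Rightarrow> nat \<Rightarrow> bool) \<Rightarrow> (nat \<Rightarrow> nat) \<Rightarrow> nat set \<Rightarrow> struc" where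
  "graph_image R c I = graph_struc (\<lambda>a b. \<exists>i\<in>I. \<exists>j\<in>I. R i j \<and> a = c i \<and> b = c j)"

lemma iso_graph_image:
  assumes "inj_on c I" "inj_on d I" "infinite (- c ` I)" "infinite (- d ` I)"
  shows "iso (graph_image R c I) (graph_image R d I)"
proof -
  obtain f where f: "bij f" "\<forall>i\<in>I. f (c i) = d i" and out: "f ` (- c ` I) = - d ` I"
    using inj_on_extend_bij[OF assms] by blast
  have preimage: "a = c i" if "i \<in> I" "f a = d i" for a i
  proof -
    have "a \<in> c ` I"
    proof (rule ccontr)
      assume "a \<notin> c ` I"
      then have "f a \<in> - d ` I" using out by blast
      with that show False by blast
    qed
    then obtain i' where "i' \<in> I" "a = c i'" by blast
    with that f(2) have "d i' = d i" by simp
    with \<open>i' \<in> I\<close> \<open>i \<in> I\<close> assms(2) have "i' = i" by (rule inj_onD[rotated 2])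
    with \<open>a = c i'\<close> show ?thesis by simp
  qed
  show ?thesis
    unfolding graph_image_def
  proof (rule iso_graph_strucI[OF f(1)])
    fix a b
    show "(\<exists>i\<in>I. \<exists>j\<in>I. R i j \<and> a = c i \<and> b = c j) \<longleftrightarrow>
          (\<exists>i\<in>I. \<exists>j\<in>I. R i j \<and> f a = d i \<and> f b = d j)"
      using f(2) preimage by blast
  qed
qed

lemma graph_image_cong: "(\<And>i. i \<in> I \<Longrightarrow> c i = d i) \<Longrightarrow> graph_image R c I = graph_image R d I"
  unfolding graph_image_def by (rule arg_cong[where f = graph_struc]) (auto simp: fun_eq_iff)

lemma E0_learnableI:
  assumes "continuous_map (subtopology struc_top (LD K)) baire \<Gamma>"
    and "\<And>S. S \<in> LD K \<Longrightarrow> \<exists>N. \<forall>n\<ge>N. \<Gamma> S n = \<tau> S"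
    and "\<And>S S'. S \<in> LD K \<Longrightarrow> S' \<in> LD K \<Longrightarrow> iso S S' \<longleftrightarrow> \<tau> S = \<tau> S'"
  shows "learnable baire E0 K"
  unfolding learnable_def
proof (intro exI conjI ballI)
  show "continuous_map (subtopology struc_top (LD K)) baire \<Gamma>" by (fact assms(1))
  fix S S' assume S: "S \<in> LD K" and S': "S' \<in> LD K"
  obtain N where N: "\<forall>n\<ge>N. \<Gamma> S n = \<tau> S" using assms(2)[OF S] by blast
  obtain N' where N': "\<forall>n\<ge>N'. \<Gamma> S' n = \<tau> S'" using assms(2)[OF S'] by blast
  have "E0 (\<Gamma> S) (\<Gamma> S') \<longleftrightarrow> \<tau> S = \<tau> S'"
  proof
    assume "E0 (\<Gamma> S) (\<Gamma> S')"
    then obtain m where "\<forall>n\<ge>m. \<Gamma> S n = \<Gamma> S' n" unfolding E0_def by blast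
    then have "\<Gamma> S (max m (max N N')) = \<Gamma> S' (max m (max N N'))" by simp
    with N N' show "\<tau> S = \<tau> S'" by simp
  next
    assume "\<tau> S = \<tau> S'"
    with N N' have "\<forall>n\<ge>max N N'. \<Gamma> S n = \<Gamma> S' n" by simp
    then show "E0 (\<Gamma> S) (\<Gamma> S')" unfolding E0_def by blast
  qed
  with assms(3)[OF S S'] show "iso S S' \<longleftrightarrow> E0 (\<Gamma> S) (\<Gamma> S')" by simp
qed

lemma Erange_reduction_range_subset:
  assumes cont: "continuous_map (subtopology struc_top L) baire \<Gamma>"
    and red: "\<forall>S\<in>L. \<forall>S'\<in>L. iso S S' \<longleftrightarrow> Erange (\<Gamma> S) (\<Gamma> S')"
    and "T \<in> L" and "T' \<in> L"
    and approx: "\<And>B. \<exists>S\<in>L. iso S T' \<and> agree_upto B S T"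
  shows "range (\<Gamma> T) \<subseteq> range (\<Gamma> T')"
proof (rule subsetI)
  fix y assume "y \<in> range (\<Gamma> T)"
  then obtain m where y: "y = \<Gamma> T m" by blast
  obtain B where B: "\<And>S. S \<in> L \<Longrightarrow> agree_upto B S T \<Longrightarrow> \<Gamma> S m = \<Gamma> T m"
    using continuous_map_baire_agree_upto[OF cont \<open>T \<in> L\<close>] by blast
  obtain S where "S \<in> L" "iso S T'" "agree_upto B S T" using approx by blast
  with B y have "y = \<Gamma> S m" by simp
  then have "y \<in> range (\<Gamma> S)" by simp
  also have "range (\<Gamma> S) = range (\<Gamma> T')"
    using red \<open>S \<in> L\<close> \<open>T' \<in> L\<close> \<open>iso S T'\<close> unfolding Erange_def by blast
  finally show "y \<in> range (\<Gamma> T')" .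
qed

lemma not_Erange_learnable_if_approximable:
  assumes "T \<in> LD K" and "T' \<in> LD K" and "\<not> iso T T'"
    and "\<And>B. \<exists>S\<in>LD K. iso S T' \<and> agree_upto B S T"
    and "\<And>B. \<exists>S\<in>LD K. iso S T \<and> agree_upto B S T'"
  shows "\<not> learnable baire Erange K"
proof
  assume "learnable baire Erange K"
  then obtain \<Gamma> where cont: "continuous_map (subtopology struc_top (LD K)) baire \<Gamma>"
    and red: "\<forall>S\<in>LD K. \<forall>S'\<in>LD K. iso S S' \<longleftrightarrow> Erange (\<Gamma> S) (\<Gamma> S')"
    unfolding learnable_def by blast
  have "range (\<Gamma> T) = range (\<Gamma> T')"
    using Erange_reduction_range_subset[OF cont red] assms by (intro subset_antisym) blast+
  with red assms(1-3) show False unfolding Erange_def by blast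
qed

definition forced_difference ::
    "struc set \<Rightarrow> (struc \<Rightarrow> nat \<Rightarrow> nat) \<Rightarrow> struc \<Rightarrow> struc \<Rightarrow> nat \<Rightarrow> nat \<Rightarrow> bool" where
  "forced_difference L \<Gamma> T T' n y \<longleftrightarrow> (\<exists>m\<ge>n. \<exists>B<y. \<Gamma> T m \<noteq> \<Gamma> T' m \<and>
     (\<forall>S\<in>L. agree_upto B S T \<longrightarrow> \<Gamma> S m = \<Gamma> T m))"

lemma forced_difference_mono:
  "forced_difference L \<Gamma> T T' n y \<Longrightarrow> y \<le> y' \<Longrightarrow> forced_difference L \<Gamma> T T' n y'"
  unfolding forced_difference_def by (meson order_less_le_trans)

lemma E0_reduction_forced_difference:
  assumes cont: "continuous_map (subtopology struc_top L) baire \<Gamma>"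
    and red: "\<forall>S\<in>L. \<forall>S'\<in>L. iso S S' \<longleftrightarrow> E0 (\<Gamma> S) (\<Gamma> S')"
    and "T \<in> L" and "T' \<in> L" and "\<not> iso T T'"
  shows "\<exists>y. forced_difference L \<Gamma> T T' n y"
proof -
  have "\<not> E0 (\<Gamma> T) (\<Gamma> T')" using red assms(3-5) by blast
  then obtain m where "m \<ge> n" and "\<Gamma> T m \<noteq> \<Gamma> T' m"
    unfolding E0_def by (meson linorder_not_le)
  moreover obtain B where "\<And>S. S \<in> L \<Longrightarrow> agree_upto B S T \<Longrightarrow> \<Gamma> S m = \<Gamma> T m"
    using continuous_map_baire_agree_upto[OF cont \<open>T \<in> L\<close>] by blast
  ultimately have "forced_difference L \<Gamma> T T' n (Suc B)"
    unfolding forced_difference_def by blast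
  then show ?thesis ..
qed

lemma prefix_recursion:
  assumes "\<And>xs. \<exists>y. Q xs y"
  shows "\<exists>c. c 0 = a \<and> (\<forall>k. Q (map c [0..<Suc k]) (c (Suc k)))"
proof -
  obtain step where step: "\<And>xs. Q xs (step xs)" using assms by metis
  define pre where "pre = rec_nat [a] (\<lambda>_ xs. xs @ [step xs])"
  define c where "c k = last (pre k)" for k
  have pre_Suc: "pre (Suc k) = pre k @ [step (pre k)]" for k by (simp add: pre_def)
  have pre_eq: "pre k = map c [0..<Suc k]" for k
    by (induction k) (simp_all add: c_def pre_def)
  have "c (Suc k) = step (pre k)" for k
    by (simp add: c_def pre_Suc)
  then have "c (Suc k) = step (map c [0..<Suc k])" for k
    by (simp only: pre_eq)
  moreover have "c 0 = a" by (simp add: c_def pre_def)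
  ultimately show ?thesis using step by metis
qed

definition omega :: struc where
  "omega = graph_struc (\<lambda>a b. a < b)"

definition omega_star :: struc where
  "omega_star = graph_struc (\<lambda>a b. b < a)"

definition K_omega :: "struc set" where
  "K_omega = {omega, omega_star}"

lemma not_iso_omega_omega_star: "\<not> iso omega omega_star"
proof
  assume "iso omega omega_star"
  then obtain f :: "nat \<Rightarrow> nat" where "bij f" and f: "\<And>a b. a < b \<longleftrightarrow> f b < f a"
    unfolding omega_def omega_star_def using iso_graph_strucD by blast
  then have "f (inv f 0) = 0" by (simp add: bij_is_surj surj_f_inv_f)
  with f[of "inv f 0" "Suc (inv f 0)"] show False by simp
qed

lemma LD_K_omega: "S \<in> LD K_omega \<longleftrightarrow> iso S omega \<or> iso S omega_star"
  unfolding LD_def K_omega_def by auto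

lemma family_K_omega: "family [2] K_omega"
  unfolding family_def K_omega_def using not_iso_omega_omega_star iso_sym
  by (auto simp: omega_def omega_star_def is_struc_graph_struc)

lemma eventually_card_less:
  fixes P Q :: "nat \<Rightarrow> bool"
  assumes "finite {c. P c}" and "\<And>c. c \<noteq> x \<Longrightarrow> \<not> P c \<Longrightarrow> Q c"
  shows "\<exists>N. \<forall>n\<ge>N. card {c. c \<le> n \<and> P c} < card {c. c \<le> n \<and> Q c}"
proof (intro exI allI impI)
  define K where "K = card {c. P c}"
  fix n assume n: "n \<ge> 2 * K + 1"
  have "card {c. c \<le> n \<and> P c} \<le> K"
    unfolding K_def using assms(1) by (intro card_mono) auto
  moreover have "card {..n} - card (insert x {c. P c}) \<le> card ({..n} - insert x {c. P c})"
    using assms(1) by (intro diff_card_le_card_Diff) simp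
  moreover have "card (insert x {c. P c}) \<le> K + 1"
    unfolding K_def by (simp add: card_insert_le_m1 card_insert_if)
  moreover have "card ({..n} - insert x {c. P c}) \<le> card {c. c \<le> n \<and> Q c}"
    using assms(2) by (intro card_mono) auto
  ultimately show "card {c. c \<le> n \<and> P c} < card {c. c \<le> n \<and> Q c}"
    using n by simp
qed

lemma bij_eventually_card_less:
  fixes f :: "nat \<Rightarrow> nat"
  assumes "bij f"
  shows "\<exists>N. \<forall>n\<ge>N. card {c. c \<le> n \<and> f c < f x} < card {c. c \<le> n \<and> f x < f c}"
proof (rule eventually_card_less)
  have "{c. f c < f x} = f -` {..<f x}" by auto
  then show "finite {c. f c < f x}"
    using assms by (simp add: bij_is_inj finite_vimageI)
  show "f x < f c" if "c \<noteq> x" "\<not> f c < f x" for c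
    using that assms by (metis bij_is_inj injD linorder_neqE_nat)
qed

text \<open>In a copy of omega only finitely many vertices lie below vertex 0, in a copy of omega*
  only finitely many lie above it.\<close>
definition order_learner :: "struc \<Rightarrow> nat \<Rightarrow> nat" where
  "order_learner S n =
    (if card {c. c \<le> n \<and> S (0, [c, 0])} < card {c. c \<le> n \<and> S (0, [0, c])} then 0 else 1)"

lemma continuous_order_learner: "continuous_map (subtopology struc_top L) baire order_learner"
proof (rule continuous_map_baire_finite_dependence)
  fix n :: nat
  let ?F = "(\<lambda>c. (0, [c, 0])) ` {..n} \<union> (\<lambda>c. (0, [0, c])) ` {..n}"
  show "finite ?F" by simp
  fix S S' :: struc assume "\<forall>x\<in>?F. S x = S' x"
  then have "{c. c \<le> n \<and> S (0, [c, 0])} = {c. c \<le> n \<and> S' (0, [c, 0])}"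
    and "{c. c \<le> n \<and> S (0, [0, c])} = {c. c \<le> n \<and> S' (0, [0, c])}"
    by auto
  then show "order_learner S n = order_learner S' n" by (simp add: order_learner_def)
qed

lemma order_learner_limit:
  assumes "S \<in> LD K_omega"
  shows "\<exists>N. \<forall>n\<ge>N. order_learner S n = (if iso S omega then 0 else 1)"
proof (cases "iso S omega")
  case True
  then obtain f :: "nat \<Rightarrow> nat" where "bij f" and S: "S = graph_struc (\<lambda>a b. f a < f b)"
    unfolding omega_def using iso_graph_struc_pullback by blast
  obtain N where "\<forall>n\<ge>N. card {c. c \<le> n \<and> f c < f 0} < card {c. c \<le> n \<and> f 0 < f c}"
    using bij_eventually_card_less[OF \<open>bij f\<close>] by blast
  then have "\<forall>n\<ge>N. order_learner S n = 0" by (simp add: order_learner_def S)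
  with True show ?thesis by auto
next
  case False
  with assms have "iso S omega_star" by (simp add: LD_K_omega)
  then obtain f :: "nat \<Rightarrow> nat" where "bij f" and S: "S = graph_struc (\<lambda>a b. f b < f a)"
    unfolding omega_star_def using iso_graph_struc_pullback by blast
  obtain N where "\<forall>n\<ge>N. card {c. c \<le> n \<and> f c < f 0} < card {c. c \<le> n \<and> f 0 < f c}"
    using bij_eventually_card_less[OF \<open>bij f\<close>] by blast
  then have "\<forall>n\<ge>N. order_learner S n = 1" by (auto simp: order_learner_def S)
  with False show ?thesis by auto
qed

lemma LD_K_omega_iso_iff:
  assumes "S \<in> LD K_omega" and "S' \<in> LD K_omega"
  shows "iso S S' \<longleftrightarrow> iso S omega = iso S' omega"
proof
  assume "iso S S'"
  then show "iso S omega = iso S' omega" using iso_sym iso_trans by blast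
next
  assume same: "iso S omega = iso S' omega"
  show "iso S S'"
  proof (cases "iso S omega")
    case True
    with same show ?thesis using iso_sym iso_trans by blast
  next
    case False
    with same assms have "iso S omega_star" and "iso S' omega_star" by (auto simp: LD_K_omega)
    then show ?thesis using iso_sym iso_trans by blast
  qed
qed

lemma E0_learnable_K_omega: "learnable baire E0 K_omega"
proof (rule E0_learnableI[OF continuous_order_learner order_learner_limit])
  fix S S' assume "S \<in> LD K_omega" and "S' \<in> LD K_omega"
  then show "iso S S' \<longleftrightarrow> (if iso S omega then 0 else 1) = (if iso S' omega then 0 else 1 :: nat)"
    using LD_K_omega_iso_iff by simp
qed

definition flip_upto :: "nat \<Rightarrow> nat \<Rightarrow> nat" where
  "flip_upto B x = (if x \<le> B then B - x else x)"

lemma bij_flip_upto: "bij (flip_upto B)"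
  by (rule o_bij[of "flip_upto B"]) (auto simp: flip_upto_def fun_eq_iff)

lemma omega_approximates_omega_star:
  "\<exists>S\<in>LD K_omega. iso S omega \<and> agree_upto B S omega_star"
proof
  let ?S = "graph_struc (\<lambda>a b. flip_upto B a < flip_upto B b)"
  show "iso ?S omega \<and> agree_upto B ?S omega_star"
  proof
    show "iso ?S omega"
      unfolding omega_def by (rule iso_graph_strucI[OF bij_flip_upto]) simp
    show "agree_upto B ?S omega_star"
      unfolding omega_star_def by (rule agree_upto_graph_struc) (auto simp: flip_upto_def)
  qed
  then show "?S \<in> LD K_omega" by (simp add: LD_K_omega)
qed

lemma omega_star_approximates_omega:
  "\<exists>S\<in>LD K_omega. iso S omega_star \<and> agree_upto B S omega"
proof
  let ?S = "graph_struc (\<lambda>a b. flip_upto B b < flip_upto B a)"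
  show "iso ?S omega_star \<and> agree_upto B ?S omega"
  proof
    show "iso ?S omega_star"
      unfolding omega_star_def by (rule iso_graph_strucI[OF bij_flip_upto]) simp
    show "agree_upto B ?S omega"
      unfolding omega_def by (rule agree_upto_graph_struc) (auto simp: flip_upto_def)
  qed
  then show "?S \<in> LD K_omega" by (simp add: LD_K_omega)
qed

lemma not_Erange_learnable_K_omega: "\<not> learnable baire Erange K_omega"
  by (rule not_Erange_learnable_if_approximable[OF _ _ not_iso_omega_omega_star
        omega_star_approximates_omega omega_approximates_omega_star])
    (simp_all add: LD_K_omega iso_refl)

definition path_rel :: "nat \<Rightarrow> nat \<Rightarrow> bool" where
  "path_rel i j \<longleftrightarrow> Suc i = j \<or> Suc j = i"

definition finite_path :: "(nat \<Rightarrow> nat) \<Rightarrow> nat \<Rightarrow> struc" where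
  "finite_path c n = graph_image path_rel c {..<n}"

definition ray :: "(nat \<Rightarrow> nat) \<Rightarrow> struc" where
  "ray c = graph_image path_rel c UNIV"

lemma finite_path_cong: "(\<And>i. i < n \<Longrightarrow> c i = d i) \<Longrightarrow> finite_path c n = finite_path d n"
  unfolding finite_path_def by (rule graph_image_cong) simp

lemma RnI_eq_finite_path: "RnI n = finite_path id n"
  unfolding RnI_def finite_path_def graph_image_def path_rel_def
  by (rule arg_cong[where f = graph_struc]) auto

lemma RI_eq_ray: "RI = ray (\<lambda>i. 2 * i)"
proof -
  have "(\<lambda>a b. even a \<and> even b \<and> (a + 2 = b \<or> b + 2 = a)) =
        (\<lambda>a b. \<exists>i j. path_rel i j \<and> a = 2 * i \<and> b = 2 * j)"
    by (auto simp: fun_eq_iff path_rel_def elim!: evenE)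
  then show ?thesis unfolding RI_def ray_def graph_image_def by simp
qed

lemma iso_finite_path_RnI:
  assumes "inj_on c {..<n}"
  shows "iso (finite_path c n) (RnI n)"
  unfolding RnI_eq_finite_path finite_path_def
  by (rule iso_graph_image[OF assms]) (simp_all add: infinite_Ici)

lemma infinite_odd_nat: "infinite {x :: nat. odd x}"
proof -
  have "range (\<lambda>i::nat. 2 * i + 1) \<subseteq> {x. odd x}" by auto
  moreover have "infinite (range (\<lambda>i::nat. 2 * i + 1))"
    by (rule range_inj_infinite) (simp add: inj_def)
  ultimately show ?thesis using infinite_super by blast
qed

lemma iso_even_ray_RI:
  assumes "inj c" and "\<And>i. even (c i)"
  shows "iso (ray c) RI"
proof -
  have "{x. odd x} \<subseteq> - range c" "{x. odd x} \<subseteq> - range (\<lambda>i::nat. 2 * i)"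
    using assms(2) by auto
  then have "infinite (- range c)" "infinite (- range (\<lambda>i::nat. 2 * i))"
    using infinite_odd_nat infinite_super by blast+
  then show ?thesis
    unfolding RI_eq_ray ray_def using iso_graph_image[OF assms(1)] by (simp add: inj_def)
qed

lemma agree_upto_ray_finite_path:
  assumes "strict_mono c" and "B < c n"
  shows "agree_upto B (ray c) (finite_path c n)"
  unfolding ray_def finite_path_def graph_image_def
proof (rule agree_upto_graph_struc)
  have small: "i < n" if "c i \<le> B" for i
    using that assms by (metis le_less_trans not_le strict_mono_less_eq)
  fix a b assume "a \<le> B" "b \<le> B"
  then show "(\<exists>i\<in>UNIV. \<exists>j\<in>UNIV. path_rel i j \<and> a = c i \<and> b = c j) \<longleftrightarrow>
        (\<exists>i\<in>{..<n}. \<exists>j\<in>{..<n}. path_rel i j \<and> a = c i \<and> b = c j)"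
    using small by auto
qed

definition edge_witness :: "struc \<Rightarrow> (nat \<times> nat) list \<Rightarrow> bool" where
  "edge_witness S ps \<longleftrightarrow> distinct (map fst ps) \<and> (\<forall>(a, b) \<in> set ps. S (0, [a, b]))"

definition sources_atleast :: "struc \<Rightarrow> nat \<Rightarrow> bool" where
  "sources_atleast S k \<longleftrightarrow> (\<exists>ps. length ps = k \<and> edge_witness S ps)"

lemma edge_witness_Nil [simp]: "edge_witness S []"
  by (simp add: edge_witness_def)

lemma sources_atleast_transfer:
  assumes "iso S S'" and "sources_atleast S k"
  shows "sources_atleast S' k"
proof -
  obtain f where "bij f" and f: "\<forall>i t. S (i, t) \<longleftrightarrow> S' (i, map f t)"
    using assms(1) unfolding iso_def by blast
  obtain ps where "length ps = k" and ps: "edge_witness S ps"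
    using assms(2) unfolding sources_atleast_def by blast
  have "inj_on f (set (map fst ps))"
    using \<open>bij f\<close> bij_is_inj inj_on_subset subset_UNIV by metis
  with ps have "distinct (map f (map fst ps))"
    unfolding edge_witness_def using distinct_map by blast
  moreover have "map fst (map (map_prod f f) ps) = map f (map fst ps)" by simp
  ultimately have "edge_witness S' (map (map_prod f f) ps)"
    using ps f unfolding edge_witness_def by auto
  moreover have "length (map (map_prod f f) ps) = k" using \<open>length ps = k\<close> by simp
  ultimately show ?thesis unfolding sources_atleast_def by blast
qed

lemma sources_atleast_iso: "iso S S' \<Longrightarrow> sources_atleast S k \<longleftrightarrow> sources_atleast S' k"
  using sources_atleast_transfer iso_sym by blast

lemma sources_atleast_RnI_le:
  assumes "sources_atleast (RnI n) k"
  shows "k \<le> n"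
proof -
  obtain ps where "length ps = k" and ps: "edge_witness (RnI n) ps"
    using assms unfolding sources_atleast_def by blast
  have "set (map fst ps) \<subseteq> {..<n}"
    using ps unfolding edge_witness_def RnI_def by auto
  then have "card (set (map fst ps)) \<le> n"
    by (metis card_lessThan card_mono finite_lessThan)
  moreover have "card (set (map fst ps)) = k"
    using ps \<open>length ps = k\<close> distinct_card unfolding edge_witness_def by fastforce
  ultimately show ?thesis by simp
qed

lemma sources_atleast_RnI:
  assumes "n \<ge> 2"
  shows "sources_atleast (RnI n) k \<longleftrightarrow> k \<le> n"
proof
  assume "k \<le> n"
  define ps where "ps = map (\<lambda>i. (i, if i = 0 then 1 else i - 1)) [0..<k]"
  have "map fst ps = [0..<k]" unfolding ps_def by (simp add: comp_def)
  then have "edge_witness (RnI n) ps"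
    unfolding edge_witness_def using \<open>k \<le> n\<close> assms by (auto simp: ps_def RnI_def)
  then show "sources_atleast (RnI n) k" unfolding sources_atleast_def ps_def by force
qed (rule sources_atleast_RnI_le)

lemma sources_atleast_RI: "sources_atleast RI k"
proof -
  define ps where "ps = map (\<lambda>i. (2 * i, 2 * i + 2)) [0..<k]"
  have "map fst ps = map (\<lambda>i. 2 * i) [0..<k]" unfolding ps_def by (simp add: comp_def)
  then have "edge_witness RI ps"
    unfolding edge_witness_def by (auto simp: ps_def RI_def distinct_map inj_on_def)
  then show ?thesis unfolding sources_atleast_def ps_def by force
qed

lemma not_iso_RnI_RI: "\<not> iso (RnI n) RI"
  using sources_atleast_iso[of "RnI n" RI "Suc n"] sources_atleast_RI sources_atleast_RnI_le
  by force

definition K_paths :: "struc set" where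
  "K_paths = RnI ` {n. n \<ge> 2} \<union> {RI}"

lemma inj_on_sources_K_paths: "inj_on (\<lambda>T. {k. sources_atleast T k}) K_paths"
proof -
  have RnI: "{k. sources_atleast (RnI n) k} = {..n}" if "n \<ge> 2" for n
    using sources_atleast_RnI[OF that] by auto
  have RI: "{k. sources_atleast RI k} = UNIV"
    using sources_atleast_RI by auto
  show ?thesis
    unfolding K_paths_def inj_on_def by (auto simp: RnI RI dest: sym)
qed

lemma family_K_paths: "family [2] K_paths"
  unfolding family_def
proof (intro conjI ballI impI)
  show "countable K_paths" unfolding K_paths_def by simp
  fix S assume "S \<in> K_paths"
  then show "is_struc [2] S" unfolding K_paths_def RnI_def RI_def by (auto intro: is_struc_graph_struc)
next
  fix S S' assume "S \<in> K_paths" "S' \<in> K_paths" "iso S S'"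
  moreover have "{k. sources_atleast S k} = {k. sources_atleast S' k}"
    using sources_atleast_iso[OF \<open>iso S S'\<close>] by simp
  ultimately show "S = S'" using inj_onD[OF inj_on_sources_K_paths] by blast
qed

definition sources_learner :: "struc \<Rightarrow> nat \<Rightarrow> nat" where
  "sources_learner S m =
    (let ps = (from_nat m :: (nat \<times> nat) list) in if edge_witness S ps then length ps else 0)"

lemma range_sources_learner: "range (sources_learner S) = {k. sources_atleast S k}"
proof (intro equalityI subsetI)
  fix k assume "k \<in> range (sources_learner S)"
  then show "k \<in> {k. sources_atleast S k}"
    by (auto simp: sources_learner_def sources_atleast_def Let_def split: if_splits)
next
  fix k assume "k \<in> {k. sources_atleast S k}"
  then obtain ps where "length ps = k" and "edge_witness S ps"
    unfolding sources_atleast_def by blast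
  then have "sources_learner S (to_nat ps) = k" by (simp add: sources_learner_def)
  then show "k \<in> range (sources_learner S)" by (metis rangeI)
qed

lemma continuous_sources_learner: "continuous_map (subtopology struc_top L) baire sources_learner"
proof (rule continuous_map_baire_finite_dependence)
  fix m :: nat
  let ?F = "(\<lambda>(a, b). (0, [a, b])) ` set (from_nat m :: (nat \<times> nat) list)"
  show "finite ?F" by simp
  fix S S' :: struc assume "\<forall>x\<in>?F. S x = S' x"
  then have "edge_witness S (from_nat m) \<longleftrightarrow> edge_witness S' (from_nat m)"
    unfolding edge_witness_def by fastforce
  then show "sources_learner S m = sources_learner S' m"
    by (simp add: sources_learner_def)
qed

lemma Erange_learnable_K_paths: "learnable baire Erange K_paths"
  unfolding learnable_def
proof (intro exI conjI ballI)
  show "continuous_map (subtopology struc_top (LD K_paths)) baire sources_learner"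
    by (rule continuous_sources_learner)
  fix S S' assume "S \<in> LD K_paths" and "S' \<in> LD K_paths"
  then obtain T T' where "T \<in> K_paths" "iso S T" "T' \<in> K_paths" "iso S' T'"
    unfolding LD_def by blast
  have "iso S S' \<longleftrightarrow> T = T'"
  proof
    assume "iso S S'"
    then have "iso T T'" using \<open>iso S T\<close> \<open>iso S' T'\<close> iso_sym iso_trans by blast
    then show "T = T'" using \<open>T \<in> K_paths\<close> \<open>T' \<in> K_paths\<close> family_K_paths
      unfolding family_def by blast
  next
    assume "T = T'"
    then show "iso S S'" using \<open>iso S T\<close> \<open>iso S' T'\<close> iso_sym iso_trans by blast
  qed
  also have "\<dots> \<longleftrightarrow> {k. sources_atleast T k} = {k. sources_atleast T' k}"
    using inj_on_sources_K_paths \<open>T \<in> K_paths\<close> \<open>T' \<in> K_paths\<close> by (auto dest: inj_onD)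
  also have "{k. sources_atleast T k} = {k. sources_atleast S k}"
    using sources_atleast_iso[OF \<open>iso S T\<close>] by simp
  also have "{k. sources_atleast T' k} = {k. sources_atleast S' k}"
    using sources_atleast_iso[OF \<open>iso S' T'\<close>] by simp
  also have "{k. sources_atleast S k} = {k. sources_atleast S' k} \<longleftrightarrow>
      Erange (sources_learner S) (sources_learner S')"
    unfolding Erange_def range_sources_learner ..
  finally show "iso S S' \<longleftrightarrow> Erange (sources_learner S) (sources_learner S')" .
qed

lemma E0_diagonal_ray:
  assumes cont: "continuous_map (subtopology struc_top (LD K_paths)) baire \<Gamma>"
    and red: "\<forall>S\<in>LD K_paths. \<forall>S'\<in>LD K_paths. iso S S' \<longleftrightarrow> E0 (\<Gamma> S) (\<Gamma> S')"
  shows "\<exists>c. strict_mono c \<and> (\<forall>i. even (c i)) \<and>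
    (\<forall>n\<ge>2. forced_difference (LD K_paths) \<Gamma> (finite_path c n) RI n (c n))"
proof -
  let ?P = "\<lambda>xs. finite_path ((!) xs) (length xs)"
  text \<open>Each new vertex lies beyond the part of the current finite path that forces the learner
    to differ from its value on RI.\<close>
  define Q where "Q xs y \<longleftrightarrow> last xs < y \<and> even y \<and>
    (?P xs \<in> LD K_paths \<and> \<not> iso (?P xs) RI \<longrightarrow>
      forced_difference (LD K_paths) \<Gamma> (?P xs) RI (length xs) y)" for xs y
  have RI: "RI \<in> LD K_paths" unfolding LD_def K_paths_def using iso_refl by blast
  have "\<exists>y. Q xs y" for xs
  proof (cases "?P xs \<in> LD K_paths \<and> \<not> iso (?P xs) RI")
    case True
    then obtain y where "forced_difference (LD K_paths) \<Gamma> (?P xs) RI (length xs) y"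
      using E0_reduction_forced_difference[OF cont red _ RI] by blast
    then have "Q xs (2 * (y + last xs + 1))"
      unfolding Q_def by (auto elim: forced_difference_mono)
    then show ?thesis ..
  next
    case False
    then have "Q xs (2 * (last xs + 1))" unfolding Q_def by auto
    then show ?thesis ..
  qed
  then obtain c where "c 0 = 0" and Qc: "\<forall>k. Q (map c [0..<Suc k]) (c (Suc k))"
    using prefix_recursion[of Q 0] by blast
  then have step: "c k < c (Suc k)" and even_Suc: "even (c (Suc k))" for k
    using Qc unfolding Q_def by auto
  have mono: "strict_mono c" using step by (rule strict_monoI_Suc)
  have even: "even (c i)" for i
    using \<open>c 0 = 0\<close> even_Suc by (cases i) auto
  have "forced_difference (LD K_paths) \<Gamma> (finite_path c n) RI n (c n)" if "n \<ge> 2" for n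
  proof -
    obtain k where n: "n = Suc k" using \<open>n \<ge> 2\<close> by (cases n) auto
    have path: "?P (map c [0..<Suc k]) = finite_path c n"
      unfolding n length_map length_upt diff_zero
      by (rule finite_path_cong) (simp del: upt_Suc)
    have iso: "iso (finite_path c n) (RnI n)"
      using mono by (intro iso_finite_path_RnI) (simp add: strict_mono_imp_inj_on inj_on_subset)
    then have "finite_path c n \<in> LD K_paths"
      using that unfolding LD_def K_paths_def by auto
    moreover have "\<not> iso (finite_path c n) RI"
      using iso not_iso_RnI_RI iso_sym iso_trans by blast
    moreover have "Q (map c [0..<Suc k]) (c n)" using Qc n by blast
    ultimately show ?thesis unfolding Q_def path by (simp add: n)
  qed
  with mono even show ?thesis by blast
qed

lemma not_E0_learnable_K_paths: "\<not> learnable baire E0 K_paths"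
proof
  assume "learnable baire E0 K_paths"
  then obtain \<Gamma> where cont: "continuous_map (subtopology struc_top (LD K_paths)) baire \<Gamma>"
    and red: "\<forall>S\<in>LD K_paths. \<forall>S'\<in>LD K_paths. iso S S' \<longleftrightarrow> E0 (\<Gamma> S) (\<Gamma> S')"
    unfolding learnable_def by blast
  obtain c where mono: "strict_mono c" and "\<forall>i. even (c i)"
    and diag: "\<forall>n\<ge>2. forced_difference (LD K_paths) \<Gamma> (finite_path c n) RI n (c n)"
    using E0_diagonal_ray[OF cont red] by blast
  have RI: "RI \<in> LD K_paths" unfolding LD_def K_paths_def using iso_refl by blast
  have "iso (ray c) RI"
    using mono \<open>\<forall>i. even (c i)\<close> by (intro iso_even_ray_RI) (simp_all add: strict_mono_imp_inj_on)
  then have ray: "ray c \<in> LD K_paths" unfolding LD_def K_paths_def by blast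
  with \<open>iso (ray c) RI\<close> RI red obtain M where M: "\<forall>n\<ge>M. \<Gamma> (ray c) n = \<Gamma> RI n"
    unfolding E0_def by blast
  obtain m B where "m \<ge> M + 2" "B < c (M + 2)"
    and ne: "\<Gamma> (finite_path c (M + 2)) m \<noteq> \<Gamma> RI m"
    and loc: "\<forall>S\<in>LD K_paths. agree_upto B S (finite_path c (M + 2)) \<longrightarrow>
       \<Gamma> S m = \<Gamma> (finite_path c (M + 2)) m"
    using diag[rule_format, of "M + 2"] unfolding forced_difference_def by auto
  have "agree_upto B (ray c) (finite_path c (M + 2))"
    using mono \<open>B < c (M + 2)\<close> by (rule agree_upto_ray_finite_path)
  with loc ray have "\<Gamma> (ray c) m = \<Gamma> (finite_path c (M + 2)) m" by blast
  moreover have "\<Gamma> (ray c) m = \<Gamma> RI m" using M \<open>m \<ge> M + 2\<close> by simp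
  ultimately show False using ne by simp
qed

theorem mainTheorem8:
  shows "(\<exists>sig K. family sig K \<and> learnable baire E0 K \<and> \<not> learnable baire Erange K)
    \<and> (\<exists>sig K. family sig K \<and> learnable baire Erange K \<and> \<not> learnable baire E0 K)
    \<and> (let K = RnI ` {n. n \<ge> 2} \<union> {RI} in
         family [2] K \<and> learnable baire Erange K \<and> \<not> learnable baire E0 K)"
proof -
  have omega: "family [2] K_omega \<and> learnable baire E0 K_omega \<and> \<not> learnable baire Erange K_omega"
    using family_K_omega E0_learnable_K_omega not_Erange_learnable_K_omega by blast
  have paths: "family [2] K_paths \<and> learnable baire Erange K_paths \<and> \<not> learnable baire E0 K_paths"
    using family_K_paths Erange_learnable_K_paths not_E0_learnable_K_paths by blast
  from omega paths show ?thesis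
    unfolding Let_def K_paths_def[symmetric] by blast
qed

end
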